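(* Let $\tilde{\mathbf{G}}$ and $\tilde{\mathbf{G}}_0$ be two degree $n$ covers of the same quasisplit reductive group $\mathbf{G}$ over $S$ (with fixed Borel subgroup and maximally split maximal torus $\mathbf{B}\supset\mathbf{T}$), with first Brylinski–Deligne invariants $Q$ and $Q_0$ on the cocharacter lattice $\mathcal{Y}$. If $Q(y)-Q_0(y)\in n\mathbb{Z}$ for all $y\in\mathcal{Y}$, then the modified dual root data coincide, $\tilde\Psi^\vee=\tilde\Psi_0^\vee$ (in particular $\mathcal{Y}_{Q,n}=\mathcal{Y}_{Q_0,n}$, $\mathcal{X}_{Q,n}=\mathcal{X}_{Q_0,n}$, and the modified roots and coroots agree), and hence the dual groups are equal: $\tilde G^\vee=\tilde G_0^\vee$.
   Context: $S$ is $\operatorname{Spec}$ of a field or of a DVR (containing a field or with finite residue field). Let $\mathcal{X},\mathcal{Y}$ be the character and cocharacter lattices of $\mathbf{T}$ (local systems on $S_{\mathrm{et}}$), $\Phi,\Phi^\vee$ roots and coroots, $\Delta,\Delta^\vee$ simple roots/coroots for $\mathbf{B}$. For a Weyl-invariant quadratic form $Q:\mathcal{Y}\to\mathbb{Z}$ set $\beta_Q(y_1,y_2)=n^{-1}(Q(y_1+y_2)-Q(y_1)-Q(y_2))$, $\mathcal{Y}_{Q,n}=\{y\in\mathcal{Y}:\beta_Q(y,y')\in\mathbb{Z}\ \forall y'\}$, $\mathcal{X}_{Q,n}=\{x\in n^{-1}\mathcal{X}:\langle x,y\rangle\in\mathbb{Z}\ \forall y\in\mathcal{Y}_{Q,n}\}$.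 For $\phi\in\Phi$ put $n_\phi=n/\gcd(n,Q(\phi^\vee))$, $\tilde\phi=n_\phi^{-1}\phi$, $\tilde\phi^\vee=n_\phi\phi^\vee$, giving sets $\tilde\Phi,\tilde\Phi^\vee,\tilde\Delta,\tilde\Delta^\vee$. The modified dual root datum is $\tilde\Psi^\vee=(\mathcal{Y}_{Q,n},\tilde\Phi^\vee,\tilde\Delta^\vee,\mathcal{X}_{Q,n},\tilde\Phi,\tilde\Delta)$, and the dual group $\tilde G^\vee$ of the cover is the local system on $S_{\mathrm{et}}$ of pinned reductive groups over $\mathbb{Z}$ with this based root datum (character lattice $\mathcal{Y}_{Q,n}$, roots $\tilde\Phi^\vee$). *)

theory Defs
  imports "HOL-Analysis.Finite_Cartesian_Product"
begin

text \<open>Lattices of rank CARD('r): cocharacters Y = int^'r, characters X = int^'r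
  with the perfect pairing below; n^{-1} X is realised inside rat^'r.\<close>

definition pair :: "int^'r::finite \<Rightarrow> int^'r \<Rightarrow> int" where
  "pair x y = (\<Sum>i\<in>UNIV. x$i * y$i)"

definition pairQ :: "rat^'r::finite \<Rightarrow> int^'r \<Rightarrow> rat" where
  "pairQ x y = (\<Sum>i\<in>UNIV. x$i * of_int (y$i))"

definition smul :: "int \<Rightarrow> int^'r::finite \<Rightarrow> int^'r" where
  "smul k v = (\<chi> i. k * v$i)"

definition to_rat :: "int^'r::finite \<Rightarrow> rat^'r" where
  "to_rat v = (\<chi> i. of_int (v$i))"

definition refl_X :: "int^'r::finite \<Rightarrow> int^'r \<Rightarrow> int^'r \<Rightarrow> int^'r" where
  "refl_X phi phiv x = x - smul (pair x phiv) phi"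

definition refl_Y :: "int^'r::finite \<Rightarrow> int^'r \<Rightarrow> int^'r \<Rightarrow> int^'r" where
  "refl_Y phi phiv y = y - smul (pair phi y) phiv"

text \<open>Based root datum (X, Phi, Delta, Y, Phi^v, Delta^v) with Delta^v = cor ` Delta.\<close>
definition based_root_datum ::
  "(int^'r::finite) set \<Rightarrow> (int^'r \<Rightarrow> int^'r) \<Rightarrow> (int^'r) set \<Rightarrow> bool" where
  "based_root_datum Phi cor Delta \<longleftrightarrow>
     finite Phi \<and> 0 \<notin> Phi \<and> inj_on cor Phi \<and>
     (\<forall>phi\<in>Phi. pair phi (cor phi) = 2) \<and>
     (\<forall>phi\<in>Phi. \<forall>psi\<in>Phi. refl_X phi (cor phi) psi \<in> Phi) \<and>
     (\<forall>phi\<in>Phi. \<forall>psi\<in>Phi. refl_Y phi (cor phi) (cor psi) \<in> cor ` Phi) \<and>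
     Delta \<subseteq> Phi \<and>
     (\<forall>c::int^'r \<Rightarrow> int. (\<Sum>d\<in>Delta. smul (c d) d) = 0 \<longrightarrow> (\<forall>d\<in>Delta. c d = 0)) \<and>
     (\<forall>phi\<in>Phi. \<exists>c::int^'r \<Rightarrow> int. phi = (\<Sum>d\<in>Delta. smul (c d) d) \<and>
                 ((\<forall>d\<in>Delta. c d \<ge> 0) \<or> (\<forall>d\<in>Delta. c d \<le> 0)))"

text \<open>Integer-valued quadratic form on Y (polar form bilinear), Weyl invariant.\<close>
definition quadratic_form :: "(int^'r::finite \<Rightarrow> int) \<Rightarrow> bool" where
  "quadratic_form Q \<longleftrightarrow>
     (\<forall>k y. Q (smul k y) = k^2 * Q y) \<and>
     (\<forall>a b c. Q (a + b + c) - Q (a + b) - Q c = (Q (a + c) - Q a - Q c) + (Q (b + c) - Q b - Q c))"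

definition weyl_invariant ::
  "(int^'r::finite) set \<Rightarrow> (int^'r \<Rightarrow> int^'r) \<Rightarrow> (int^'r \<Rightarrow> int) \<Rightarrow> bool" where
  "weyl_invariant Phi cor Q \<longleftrightarrow> (\<forall>phi\<in>Phi. \<forall>y. Q (refl_Y phi (cor phi) y) = Q y)"

definition betaQ :: "(int^'r::finite \<Rightarrow> int) \<Rightarrow> nat \<Rightarrow> int^'r \<Rightarrow> int^'r \<Rightarrow> rat" where
  "betaQ Q n y1 y2 = of_int (Q (y1 + y2) - Q y1 - Q y2) / of_nat n"

definition Y_Qn :: "(int^'r::finite \<Rightarrow> int) \<Rightarrow> nat \<Rightarrow> (int^'r) set" where
  "Y_Qn Q n = {y. \<forall>y'. betaQ Q n y y' \<in> \<int>}"

definition X_Qn :: "(int^'r::finite \<Rightarrow> int) \<Rightarrow> nat \<Rightarrow> (rat^'r) set" where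
  "X_Qn Q n = {x. (\<exists>x0::int^'r. x = (\<chi> i. of_int (x0$i) / of_nat n)) \<and>
                   (\<forall>y\<in>Y_Qn Q n. pairQ x y \<in> \<int>)}"

definition n_root :: "(int^'r::finite \<Rightarrow> int) \<Rightarrow> nat \<Rightarrow> (int^'r \<Rightarrow> int^'r) \<Rightarrow> int^'r \<Rightarrow> int" where
  "n_root Q n cor phi = int n div gcd (int n) (Q (cor phi))"

definition tilde_root :: "(int^'r::finite \<Rightarrow> int) \<Rightarrow> nat \<Rightarrow> (int^'r \<Rightarrow> int^'r) \<Rightarrow> int^'r \<Rightarrow> rat^'r" where
  "tilde_root Q n cor phi = (\<chi> i. of_int (phi$i) / of_int (n_root Q n cor phi))"

definition tilde_coroot :: "(int^'r::finite \<Rightarrow> int) \<Rightarrow> nat \<Rightarrow> (int^'r \<Rightarrow> int^'r) \<Rightarrow> int^'r \<Rightarrow> int^'r" where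
  "tilde_coroot Q n cor phi = smul (n_root Q n cor phi) (cor phi)"

definition modified_dual_root_datum ::
  "(int^'r::finite \<Rightarrow> int) \<Rightarrow> nat \<Rightarrow> (int^'r) set \<Rightarrow> (int^'r \<Rightarrow> int^'r) \<Rightarrow> (int^'r) set \<Rightarrow>
   (int^'r) set \<times> (int^'r) set \<times> (int^'r) set \<times> (rat^'r) set \<times> (rat^'r) set \<times> (rat^'r) set" where
  "modified_dual_root_datum Q n Phi cor Delta =
     (Y_Qn Q n, tilde_coroot Q n cor ` Phi, tilde_coroot Q n cor ` Delta,
      X_Qn Q n, tilde_root Q n cor ` Phi, tilde_root Q n cor ` Delta)"

text \<open>The dual group is, by definition, the pinned reductive group over Z with this
  based root datum (unique up to unique pinned isomorphism); we identify it with
  its based root datum.\<close>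
definition dual_group where
  "dual_group Q n Phi cor Delta = modified_dual_root_datum Q n Phi cor Delta"

end

theory Submission
  imports Defs
begin

text \<open>Every ingredient of the modified dual root datum depends on \<open>Q\<close> only through
  divisibility by \<open>n\<close>: the lattice \<open>Y_{Q,n}\<close> through the polar form of \<open>Q\<close> modulo \<open>n\<close>,
  \<open>X_{Q,n}\<close> through \<open>Y_{Q,n}\<close>, and \<open>n_\<phi>\<close> through \<open>gcd(n, Q(\<phi>\<^sup>\<or>))\<close>, which is unchanged
  when \<open>Q(\<phi>\<^sup>\<or>)\<close> is replaced by a congruent integer.\<close>

lemma of_int_divide_of_nat_in_Ints_iff:
  assumes "n > 0"
  shows "(of_int a / of_nat n :: 'a::field_char_0) \<in> \<int> \<longleftrightarrow> int n dvd a"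
proof
  assume "(of_int a / of_nat n :: 'a) \<in> \<int>"
  then obtain k where "(of_int a / of_nat n :: 'a) = of_int k" by (auto elim: Ints_cases)
  then have "(of_int a :: 'a) = of_int (k * int n)"
    using assms by (simp add: field_simps)
  then show "int n dvd a" by (simp only: of_int_eq_iff dvd_triv_right)
next
  assume "int n dvd a"
  then obtain k where "a = int n * k" by auto
  then show "(of_int a / of_nat n :: 'a) \<in> \<int>" using assms by simp
qed

lemma betaQ_in_Ints_iff:
  "n > 0 \<Longrightarrow> betaQ Q n y y' \<in> \<int> \<longleftrightarrow> int n dvd (Q (y + y') - Q y - Q y')"
  unfolding betaQ_def by (rule of_int_divide_of_nat_in_Ints_iff)

lemma Y_Qn_eq_if_congruent:
  assumes "\<forall>y. int n dvd (Q y - Q0 y)"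
  shows "Y_Qn Q n = Y_Qn Q0 n"
proof (cases "n = 0")
  case True
  with assms have "Q = Q0" by auto
  then show ?thesis by simp
next
  case False
  have "int n dvd (Q (y + y') - Q y - Q y') \<longleftrightarrow> int n dvd (Q0 (y + y') - Q0 y - Q0 y')" for y y'
  proof -
    have "int n dvd (Q (y + y') - Q0 (y + y')) - (Q y - Q0 y) - (Q y' - Q0 y')"
      using assms by auto
    moreover have "Q (y + y') - Q y - Q y' = (Q0 (y + y') - Q0 y - Q0 y')
        + ((Q (y + y') - Q0 (y + y')) - (Q y - Q0 y) - (Q y' - Q0 y'))"
      by simp
    ultimately show ?thesis by (metis dvd_add_left_iff)
  qed
  with False show ?thesis unfolding Y_Qn_def by (simp add: betaQ_in_Ints_iff)
qed

lemma X_Qn_eq_if_congruent: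
  "\<forall>y. int n dvd (Q y - Q0 y) \<Longrightarrow> X_Qn Q n = X_Qn Q0 n"
  unfolding X_Qn_def by (simp add: Y_Qn_eq_if_congruent)

lemma gcd_eq_if_dvd_diff:
  fixes m a b :: int
  assumes "m dvd a - b"
  shows "gcd m a = gcd m b"
proof -
  obtain k where "a = k * m + b" using assms by (metis dvd_def diff_eq_eq mult.commute)
  then show ?thesis by (simp add: gcd_add_mult)
qed

lemma n_root_eq_if_congruent:
  "\<forall>y. int n dvd (Q y - Q0 y) \<Longrightarrow> n_root Q n cor = n_root Q0 n cor"
  unfolding n_root_def by (metis gcd_eq_if_dvd_diff)

lemma modified_dual_root_datum_eq_if_congruent:
  assumes "\<forall>y. int n dvd (Q y - Q0 y)"
  shows "modified_dual_root_datum Q n Phi cor Delta = modified_dual_root_datum Q0 n Phi cor Delta"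
proof -
  have "tilde_root Q n cor = tilde_root Q0 n cor" "tilde_coroot Q n cor = tilde_coroot Q0 n cor"
    unfolding tilde_root_def tilde_coroot_def n_root_eq_if_congruent[OF assms] by simp_all
  then show ?thesis
    unfolding modified_dual_root_datum_def
    using Y_Qn_eq_if_congruent[OF assms] X_Qn_eq_if_congruent[OF assms] by simp
qed

theorem mainTheorem3:
  fixes Phi Delta :: "(int^'r::finite) set" and cor :: "int^'r \<Rightarrow> int^'r"
    and Q Q0 :: "int^'r \<Rightarrow> int" and n :: nat
  assumes "n \<ge> 1"
    and "based_root_datum Phi cor Delta"
    and "quadratic_form Q" and "weyl_invariant Phi cor Q"
    and "quadratic_form Q0" and "weyl_invariant Phi cor Q0"
    and congruent: "\<forall>y. int n dvd (Q y - Q0 y)"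
  shows "Y_Qn Q n = Y_Qn Q0 n \<and> X_Qn Q n = X_Qn Q0 n
    \<and> modified_dual_root_datum Q n Phi cor Delta = modified_dual_root_datum Q0 n Phi cor Delta
    \<and> dual_group Q n Phi cor Delta = dual_group Q0 n Phi cor Delta"
  using Y_Qn_eq_if_congruent[OF congruent] X_Qn_eq_if_congruent[OF congruent]
    modified_dual_root_datum_eq_if_congruent[OF congruent]
  unfolding dual_group_def by simp

end
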